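(* Let $T\subset\mathbb{R}^3$ be a smooth (open) surface patch with smooth unit normal field $\mathring\nu$, and let $P=I-\mathring\nu\otimes\mathring\nu$. Let $u\in[C^2(\overline T)]^3$, $\phi=\mathrm{id}+u$, and $F:=\nabla_\tau\phi=P+\nabla_\tau u$, and assume $\operatorname{rank}F=2$ on $T$. Let $\nu:=\operatorname{cof}(F)\mathring\nu/\|\operatorname{cof}(F)\mathring\nu\|_2$ (the deformed normal pulled back to $T$, so that $F^T\nu=0$). Let $\sigma$ be a symmetric $3\times3$ matrix field on $T$ with $\sigma\mathring\nu=0$. Then pointwise on $T$ $$\sigma:\big(F^T\nabla_\tau\nu-\nabla_\tau\mathring\nu\big)=-\,\sigma:\Big(\mathcal H_\nu+\big(1-\mathring\nu\cdot\nu\big)\nabla_\tau\mathring\nu\Big),\qquad \mathcal H_\nu:=\sum_{i=1}^3\nu_i\,\nabla_\tau^2u_i .$$ In particular, for such $\sigma$, $\int_T\sigma:(F^T\nabla_\tau\nu-\nabla_\tau\mathring\nu)\,dx=-\int_T\sigma:(\mathcal H_\nu+(1-\mathring\nu\cdot\nu)\nabla_\tau\mathring\nu)\,dx$.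
   Context: For a scalar function $f$ on $T$, $\nabla_\tau f\in\mathbb{R}^3$ is the surface (tangential) gradient, e.g. $\nabla_\tau f=P\nabla\tilde f$ for any smooth extension $\tilde f$. For a vector field $w$, $\nabla_\tau w$ is the $3\times3$ matrix with $(\nabla_\tau w)_{ij}=(\nabla_\tau w_i)_j$ (so $(\nabla_\tau w)\mathring\nu=0$). The surface Hessian of a scalar $f$ is $\nabla_\tau^2f:=\nabla_\tau(\nabla_\tau f)$, i.e. $(\nabla^2_\tau f)_{jk}=(\nabla_\tau(\nabla_\tau f)_j)_k$. $A:B=\sum_{ij}A_{ij}B_{ij}$, $\operatorname{cof}$ denotes the cofactor matrix and $a\otimes b=ab^T$. *)

theory Defs
  imports "HOL-Analysis.Analysis"
begin

definition outer :: "real^'n \<Rightarrow> real^'n \<Rightarrow> real^'n^'n" where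
  "outer a b = (\<chi> i j. a$i * b$j)"

definition projP :: "real^'n \<Rightarrow> real^'n^'n" where
  "projP n = mat 1 - outer n n"

definition frob :: "real^'n^'m \<Rightarrow> real^'n^'m \<Rightarrow> real" where
  "frob A B = (\<Sum>i\<in>UNIV. \<Sum>j\<in>UNIV. A$i$j * B$i$j)"

text \<open>Cofactor matrix: entry (i,j) is (-1)^(i+j) times the (i,j) minor, written as the
  determinant of A with row i replaced by the j-th unit row vector.\<close>
definition cofactor :: "real^'n^'n \<Rightarrow> real^'n^'n" where
  "cofactor A = (\<chi> i j. det (\<chi> k l. if k = i then (if l = j then 1 else 0) else A$k$l))"

definition amb_grad :: "(real^'n \<Rightarrow> real) \<Rightarrow> real^'n \<Rightarrow> real^'n" where
  "amb_grad f x = (\<chi> j. frechet_derivative f (at x) (axis j 1))"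

text \<open>Tangential gradient of a scalar function (given by a smooth extension f),
  relative to the normal field nu: P grad f.\<close>
definition tgrad :: "(real^'n \<Rightarrow> real^'n) \<Rightarrow> (real^'n \<Rightarrow> real) \<Rightarrow> real^'n \<Rightarrow> real^'n" where
  "tgrad nu f x = projP (nu x) *v amb_grad f x"

definition tgradV :: "(real^'n \<Rightarrow> real^'n) \<Rightarrow> (real^'n \<Rightarrow> real^'n) \<Rightarrow> real^'n \<Rightarrow> real^'n^'n" where
  "tgradV nu w x = (\<chi> i. tgrad nu (\<lambda>y. w y $ i) x)"

definition thess :: "(real^'n \<Rightarrow> real^'n) \<Rightarrow> (real^'n \<Rightarrow> real) \<Rightarrow> real^'n \<Rightarrow> real^'n^'n" where
  "thess nu f x = tgradV nu (\<lambda>y. tgrad nu f y) x"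

definition C1_on :: "'a::euclidean_space set \<Rightarrow> ('a \<Rightarrow> 'b::real_normed_vector) \<Rightarrow> bool" where
  "C1_on U f \<longleftrightarrow> f differentiable_on U \<and>
     (\<forall>j\<in>Basis. continuous_on U (\<lambda>x. frechet_derivative f (at x) j))"

definition C2_on :: "'a::euclidean_space set \<Rightarrow> ('a \<Rightarrow> 'b::real_normed_vector) \<Rightarrow> bool" where
  "C2_on U f \<longleftrightarrow> C1_on U f \<and> (\<forall>j\<in>Basis. C1_on U (\<lambda>x. frechet_derivative f (at x) j))"

text \<open>T is a smooth surface patch X(D) with unit normal field nu (nu given by a smooth
  ambient extension on the open set U containing T).\<close>
definition surface_patch ::
  "(real^2 \<Rightarrow> real^3) \<Rightarrow> (real^2) set \<Rightarrow> (real^3) set \<Rightarrow> (real^3 \<Rightarrow> real^3) \<Rightarrow> bool" where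
  "surface_patch X D T nu \<longleftrightarrow> open D \<and> T = X ` D \<and> inj_on X D \<and> C2_on D X \<and>
     (\<forall>s\<in>D. inj (frechet_derivative X (at s))) \<and>
     (\<forall>s\<in>D. norm (nu (X s)) = 1 \<and> (\<forall>j\<in>Basis. nu (X s) \<bullet> frechet_derivative X (at s) j = 0))"

definition area_elem :: "(real^2 \<Rightarrow> real^3) \<Rightarrow> real^2 \<Rightarrow> real" where
  "area_elem X s = (let a = frechet_derivative X (at s) (axis 1 1);
                        b = frechet_derivative X (at s) (axis 2 1)
                    in sqrt ((a \<bullet> a) * (b \<bullet> b) - (a \<bullet> b)^2))"

end

theory Submission
  imports Defs
begin

(*
  Since nu is parallel to cof(F) nu0 and F^T cof(F) = det F I = 0 (F has rank 2), we have
  F^T nu = 0 on T. A function vanishing on T has vanishing tangential gradient, because the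
  differential of the parametrisation spans the tangent plane; hence the tangential gradient of
  F^T nu vanishes. Since the tangential gradient of F_ik is the k-th row of the Hessian of u_i minus
  nu0_i (grad nu0_k) + nu0_k (grad nu0_i), the product rule turns this into
    F^T (grad nu) = (nu0 . nu) (grad nu0) - H_nu + nu0 (x) (grad nu0)^T nu,
  and the last term is annihilated by sigma, which is symmetric with sigma nu0 = 0.
  The normalisation defining nu is legitimate: if F nu0 = 0, the entries of cof(F) nu0 are
  nu0 . (F_j x F_k) for rows F_j, F_k orthogonal to nu0, and these all vanish only if the rows of F
  are pairwise parallel, i.e. rank F <= 1.
*)

unbundle cross3_syntax

section \<open>Cofactors of 3 \<times> 3 matrices\<close>

lemma transpose_mult_cofactor_mult_vec:
  fixes A :: "real^3^3"
  shows "transpose A *v (cofactor A *v n) = det A *\<^sub>R n"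
  by (simp add: vec_eq_iff forall_3 matrix_vector_mult_def sum_3 transpose_def cofactor_def det_3; algebra)

lemma cofactor_mult_vec_eq_cross:
  fixes A :: "real^3^3"
  shows "cofactor A *v n = vector [n \<bullet> (A$2 \<times> A$3), n \<bullet> (A$3 \<times> A$1), n \<bullet> (A$1 \<times> A$2)]"
  by (simp add: vec_eq_iff forall_3 matrix_vector_mult_def sum_3 cofactor_def det_3 cross3_simps)

lemma cross_eq_normal_component:
  fixes a b n :: "real^3"
  assumes "n \<bullet> a = 0" "n \<bullet> b = 0" "n \<bullet> n = 1"
  shows "a \<times> b = (n \<bullet> (a \<times> b)) *\<^sub>R n"
  by (rule cross_dot_cancel[where x = n]) (use assms in \<open>auto simp: Lagrange cross_mult_right\<close>)

lemma rank_le_1_if_rows_cross_zero: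
  fixes A :: "real^3^'m"
  assumes "\<And>i j. A$i \<times> A$j = 0"
  shows "rank A \<le> 1"
proof (cases "A = 0")
  case False
  then obtain i where i: "A$i \<noteq> 0" by (auto simp: vec_eq_iff)
  have "A$j \<in> span {A$i}" for j
    using assms[of i j] i by (auto simp: cross_eq_0 collinear_lemma span_singleton)
  then have "rows A \<subseteq> span {A$i}" by (auto simp: rows_def row_def)
  then have "dim (rows A) \<le> card {A$i}" by (intro dim_le_card) auto
  then show ?thesis by (simp add: row_rank_def)
qed simp

lemma cofactor_mult_kernel_nonzero:
  fixes A :: "real^3^3"
  assumes rank: "rank A = 2" and kernel: "A *v n = 0" and unit: "n \<bullet> n = 1"
  shows "cofactor A *v n \<noteq> 0"
proof
  assume "cofactor A *v n = 0"
  then have "n \<bullet> (A$2 \<times> A$3) = 0" "n \<bullet> (A$3 \<times> A$1) = 0" "n \<bullet> (A$1 \<times> A$2) = 0"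
    by (simp_all add: cofactor_mult_vec_eq_cross vec_eq_iff forall_3)
  then have "\<forall>i j. n \<bullet> (A$i \<times> A$j) = 0"
    unfolding forall_3
    by (simp add: cross_skew[of "A$1" "A$3"] cross_skew[of "A$3" "A$2"] cross_skew[of "A$2" "A$1"])
  moreover have "n \<bullet> A$i = 0" for i
    using kernel by (simp add: vec_eq_iff matrix_vector_mul_component inner_commute)
  ultimately have "A$i \<times> A$j = 0" for i j
    using cross_eq_normal_component[OF _ _ unit, of "A$i" "A$j"] by simp
  then have "rank A \<le> 1" by (rule rank_le_1_if_rows_cross_zero)
  with rank show False by simp
qed

section \<open>Tangential calculus\<close>

lemma amb_grad_eq: "(f has_derivative f') (at x) \<Longrightarrow> amb_grad f x = (\<chi> j. f' (axis j 1))"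
  unfolding amb_grad_def by (simp add: frechet_derivative_at[symmetric])

lemma amb_grad_inner:
  assumes "(f has_derivative f') (at x)"
  shows "amb_grad f x \<bullet> h = f' h"
proof -
  have "f' h = f' (\<Sum>j\<in>UNIV. h$j *\<^sub>R axis j 1)"
    using basis_expansion[of h] by (simp add: scalar_mult_eq_scaleR)
  also have "\<dots> = (\<Sum>j\<in>UNIV. h$j * f' (axis j 1))"
    using has_derivative_linear[OF assms] by (simp add: linear_sum linear_scale)
  finally show ?thesis by (simp add: amb_grad_eq[OF assms] inner_vec_def mult.commute)
qed

lemma amb_grad_const: "amb_grad (\<lambda>y. c) x = 0"
  using amb_grad_eq[OF has_derivative_const] by (simp add: vec_eq_iff)

lemma amb_grad_add:
  assumes "f differentiable (at x)" "g differentiable (at x)"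
  shows "amb_grad (\<lambda>y. f y + g y) x = amb_grad f x + amb_grad g x"
proof -
  obtain f' g' where f: "(f has_derivative f') (at x)" and g: "(g has_derivative g') (at x)"
    using assms unfolding differentiable_def by blast
  show ?thesis
    using amb_grad_eq[OF has_derivative_add[OF f g]] by (simp add: amb_grad_eq[OF f] amb_grad_eq[OF g] vec_eq_iff)
qed

lemma amb_grad_diff:
  assumes "f differentiable (at x)" "g differentiable (at x)"
  shows "amb_grad (\<lambda>y. f y - g y) x = amb_grad f x - amb_grad g x"
proof -
  obtain f' g' where f: "(f has_derivative f') (at x)" and g: "(g has_derivative g') (at x)"
    using assms unfolding differentiable_def by blast
  show ?thesis
    using amb_grad_eq[OF has_derivative_diff[OF f g]] by (simp add: amb_grad_eq[OF f] amb_grad_eq[OF g] vec_eq_iff)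
qed

lemma amb_grad_mult:
  assumes "f differentiable (at x)" "g differentiable (at x)"
  shows "amb_grad (\<lambda>y. f y * g y) x = f x *\<^sub>R amb_grad g x + g x *\<^sub>R amb_grad f x"
proof -
  obtain f' g' where f: "(f has_derivative f') (at x)" and g: "(g has_derivative g') (at x)"
    using assms unfolding differentiable_def by blast
  show ?thesis
    using amb_grad_eq[OF has_derivative_mult[OF f g]]
    by (simp add: amb_grad_eq[OF f] amb_grad_eq[OF g] vec_eq_iff mult.commute)
qed

lemma amb_grad_sum:
  assumes "finite A" "\<And>a. a \<in> A \<Longrightarrow> f a differentiable (at x)"
  shows "amb_grad (\<lambda>y. \<Sum>a\<in>A. f a y) x = (\<Sum>a\<in>A. amb_grad (f a) x)"
  using assms
proof (induction A rule: finite_induct)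
  case empty
  then show ?case by (simp add: amb_grad_const)
next
  case (insert a A)
  then have "(\<lambda>y. \<Sum>a\<in>A. f a y) differentiable (at x)"
    by (intro differentiable_sum) auto
  with insert show ?case by (simp add: amb_grad_add)
qed

lemma tgrad_const: "tgrad nu (\<lambda>y. c) x = 0"
  by (simp add: tgrad_def amb_grad_const)

lemma tgrad_add:
  "f differentiable (at x) \<Longrightarrow> g differentiable (at x) \<Longrightarrow>
    tgrad nu (\<lambda>y. f y + g y) x = tgrad nu f x + tgrad nu g x"
  by (simp add: tgrad_def amb_grad_add matrix_vector_right_distrib)

lemma tgrad_diff:
  "f differentiable (at x) \<Longrightarrow> g differentiable (at x) \<Longrightarrow>
    tgrad nu (\<lambda>y. f y - g y) x = tgrad nu f x - tgrad nu g x"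
  by (simp add: tgrad_def amb_grad_diff matrix_vector_mult_diff_distrib)

lemma tgrad_mult:
  "f differentiable (at x) \<Longrightarrow> g differentiable (at x) \<Longrightarrow>
    tgrad nu (\<lambda>y. f y * g y) x = f x *\<^sub>R tgrad nu g x + g x *\<^sub>R tgrad nu f x"
  by (simp add: tgrad_def amb_grad_mult matrix_vector_right_distrib matrix_vector_mult_scaleR)

lemma tgrad_sum:
  "finite A \<Longrightarrow> (\<And>a. a \<in> A \<Longrightarrow> f a differentiable (at x)) \<Longrightarrow>
    tgrad nu (\<lambda>y. \<Sum>a\<in>A. f a y) x = (\<Sum>a\<in>A. tgrad nu (f a) x)"
  by (simp add: tgrad_def amb_grad_sum vec.sum)

lemma outer_mult_vec: "outer a b *v v = (b \<bullet> v) *\<^sub>R a"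
  by (simp add: vec_eq_iff outer_def matrix_vector_mult_def inner_vec_def sum_distrib_left algebra_simps)

lemma projP_mult_vec: "projP n *v v = v - (n \<bullet> v) *\<^sub>R n"
  by (simp add: projP_def matrix_vector_mult_diff_rdistrib outer_mult_vec)

lemma inner_tgrad_normal: "nu x \<bullet> nu x = 1 \<Longrightarrow> tgrad nu f x \<bullet> nu x = 0"
  by (simp add: tgrad_def projP_mult_vec inner_diff_left inner_commute)
     (simp add: inner_diff_right)

lemma tgradV_mult_normal: "nu x \<bullet> nu x = 1 \<Longrightarrow> tgradV nu w x *v nu x = 0"
  by (simp add: vec_eq_iff matrix_vector_mul_component tgradV_def inner_tgrad_normal)

lemma C2_on_differentiable_at:
  "C2_on U f \<Longrightarrow> open U \<Longrightarrow> x \<in> U \<Longrightarrow> f differentiable (at x)"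
  unfolding C2_on_def C1_on_def by (metis differentiable_on_eq_differentiable_at)

lemma C2_on_derivative_differentiable_at:
  "C2_on U f \<Longrightarrow> open U \<Longrightarrow> x \<in> U \<Longrightarrow> j \<in> Basis \<Longrightarrow>
    (\<lambda>y. frechet_derivative f (at y) j) differentiable (at x)"
  unfolding C2_on_def C1_on_def by (metis differentiable_on_eq_differentiable_at)

lemma differentiable_vec_nth: "f differentiable F \<Longrightarrow> (\<lambda>y. f y $ i) differentiable F"
  unfolding differentiable_def using bounded_linear.has_derivative[OF bounded_linear_vec_nth] by blast

lemma differentiable_vec_componentwise:
  fixes f :: "'a::euclidean_space \<Rightarrow> real^'n"
  assumes "\<And>i. (\<lambda>y. f y $ i) differentiable (at x)"
  shows "f differentiable (at x)"
  unfolding differentiable_componentwise_within[of f] using assms by (auto simp: Basis_vec_def inner_axis)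

lemma amb_grad_vec_nth:
  assumes "f differentiable (at y)"
  shows "amb_grad (\<lambda>z. f z $ i) y $ l = frechet_derivative f (at y) (axis l 1) $ i"
proof -
  have "(f has_derivative frechet_derivative f (at y)) (at y)"
    using assms frechet_derivative_works by blast
  from bounded_linear.has_derivative[OF bounded_linear_vec_nth this, of i]
  show ?thesis by (simp add: amb_grad_eq)
qed

lemma amb_grad_vec_nth_differentiable:
  assumes "C2_on U f" "open U" "x \<in> U"
  shows "(\<lambda>y. amb_grad (\<lambda>z. f z $ i) y $ l) differentiable (at x)"
proof -
  have "(\<lambda>y. frechet_derivative f (at y) (axis l 1) $ i) differentiable (at x)"
    using assms by (intro differentiable_vec_nth C2_on_derivative_differentiable_at)
      (auto simp: axis_in_Basis_iff)
  then obtain d where d: "((\<lambda>y. frechet_derivative f (at y) (axis l 1) $ i) has_derivative d) (at x)"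
    unfolding differentiable_def by blast
  have "((\<lambda>y. amb_grad (\<lambda>z. f z $ i) y $ l) has_derivative d) (at x)"
    using assms C2_on_differentiable_at[OF assms(1,2)]
    by (intro has_derivative_transform_within_open[OF d \<open>open U\<close> \<open>x \<in> U\<close>]) (simp add: amb_grad_vec_nth)
  then show ?thesis unfolding differentiable_def by blast
qed

lemma tgrad_vec_nth:
  "tgrad nu f y $ k = (\<Sum>l\<in>UNIV. ((mat 1 :: real^'n^'n) $ k $ l - nu y $ k * nu y $ l) * amb_grad f y $ l)"
  by (simp add: tgrad_def projP_def outer_def matrix_vector_mult_def)

lemma tgrad_vec_nth_differentiable:
  assumes "\<And>i. (\<lambda>y. nu y $ i) differentiable (at x)" "\<And>l. (\<lambda>y. amb_grad f y $ l) differentiable (at x)"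
  shows "(\<lambda>y. tgrad nu f y $ k) differentiable (at x)"
  unfolding tgrad_vec_nth using assms
  by (intro differentiable_sum differentiable_mult differentiable_diff differentiable_const) auto

lemma differentiable_prod:
  fixes f :: "'i \<Rightarrow> 'a::real_normed_vector \<Rightarrow> 'b::real_normed_field"
  assumes "\<And>i. i \<in> I \<Longrightarrow> f i differentiable (at x)"
  shows "(\<lambda>y. \<Prod>i\<in>I. f i y) differentiable (at x)"
proof -
  obtain f' where "\<And>i. i \<in> I \<Longrightarrow> (f i has_derivative f' i) (at x)"
    using assms unfolding differentiable_def by metis
  then show ?thesis unfolding differentiable_def by (blast intro: has_derivative_prod)
qed

lemma det_differentiable:
  fixes A :: "'a::real_normed_vector \<Rightarrow> real^'n^'n"
  assumes "\<And>i j. (\<lambda>y. A y $ i $ j) differentiable (at x)"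
  shows "(\<lambda>y. det (A y)) differentiable (at x)"
proof -
  have "(\<lambda>y. \<Prod>i\<in>UNIV. A y $ i $ p i) differentiable (at x)" for p :: "'n \<Rightarrow> 'n"
    by (rule differentiable_prod) (rule assms)
  then show ?thesis
    unfolding det_def by (auto intro!: differentiable_sum differentiable_mult simp: finite_permutations)
qed

lemma cofactor_mult_vec_differentiable:
  fixes A :: "'a::euclidean_space \<Rightarrow> real^'n^'n"
  assumes "\<And>i j. (\<lambda>y. A y $ i $ j) differentiable (at x)" "\<And>i. (\<lambda>y. n y $ i) differentiable (at x)"
  shows "(\<lambda>y. cofactor (A y) *v n y) differentiable (at x)"
proof -
  have entry: "(\<lambda>y. if P then c else A y $ k $ l) differentiable (at x)" for P c k l
    by (cases P) (simp_all add: assms)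
  have cof: "(\<lambda>y. cofactor (A y) $ i $ j) differentiable (at x)" for i j
    unfolding cofactor_def vec_lambda_beta by (rule det_differentiable) (unfold vec_lambda_beta, rule entry)
  have "(\<lambda>y. (cofactor (A y) *v n y) $ i) differentiable (at x)" for i
    unfolding matrix_vector_mult_def vec_lambda_beta
    by (rule differentiable_sum) (simp, intro ballI differentiable_mult cof assms)
  then show ?thesis by (rule differentiable_vec_componentwise)
qed

section \<open>Functions vanishing on a surface patch\<close>

lemma surface_patch_has_derivative:
  assumes "surface_patch X D T nu0" "s \<in> D"
  shows "(X has_derivative frechet_derivative X (at s)) (at s)"
proof -
  from assms(1) have "open D" "C2_on D X"
    unfolding surface_patch_def by simp_all
  then show ?thesis
    using C2_on_differentiable_at assms(2) frechet_derivative_works by blast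
qed

lemma range_derivative_eq_tangent_plane:
  assumes patch: "surface_patch X D T nu0" and s: "s \<in> D"
  shows "range (frechet_derivative X (at s)) = {v. nu0 (X s) \<bullet> v = 0}"
proof -
  define n where "n = nu0 (X s)"
  define X' where "X' = frechet_derivative X (at s)"
  from patch s have inj: "inj X'" and "norm n = 1" and perp: "\<forall>b\<in>Basis. n \<bullet> X' b = 0"
    unfolding surface_patch_def n_def X'_def by simp_all
  have lin: "linear X'"
    using has_derivative_linear[OF surface_patch_has_derivative[OF patch s]] by (simp add: X'_def)
  have "n \<noteq> 0" using \<open>norm n = 1\<close> by auto
  have "n \<bullet> X' v = 0" for v
  proof -
    have "X' v = X' (\<Sum>b\<in>Basis. (v \<bullet> b) *\<^sub>R b)"
      by (simp add: euclidean_representation)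
    also have "\<dots> = (\<Sum>b\<in>Basis. (v \<bullet> b) *\<^sub>R X' b)"
      using lin by (simp add: linear_sum linear_scale)
    finally show ?thesis using perp by (simp add: inner_sum_right)
  qed
  then have sub: "range X' \<subseteq> {v. n \<bullet> v = 0}" by auto
  have "dim (range X') = dim (UNIV :: (real^2) set)"
    using inj by (intro eucl.dim_image_eq[OF lin]) (simp add: inj_on_def inj_def)
  also have "\<dots> = dim {v. n \<bullet> v = 0}"
    using dim_hyperplane[OF \<open>n \<noteq> 0\<close>] by simp
  finally have "dim {v. n \<bullet> v = 0} \<le> dim (range X')" by simp
  then show ?thesis
    unfolding n_def[symmetric] X'_def[symmetric]
    by (rule subspace_dim_equal[OF linear_subspace_image[OF lin subspace_UNIV] subspace_hyperplane sub])
qed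

lemma tgrad_eq_0_if_vanishing_on_patch:
  assumes patch: "surface_patch X D T nu0" and s: "s \<in> D"
    and f: "f differentiable (at (X s))" and vanish: "\<forall>s'\<in>D. f (X s') = 0"
  shows "tgrad nu0 f (X s) = 0"
proof -
  define n where "n = nu0 (X s)"
  define X' where "X' = frechet_derivative X (at s)"
  define g where "g = amb_grad f (X s)"
  obtain f' where f': "(f has_derivative f') (at (X s))"
    using f unfolding differentiable_def by blast
  have X': "(X has_derivative X') (at s)"
    unfolding X'_def by (rule surface_patch_has_derivative[OF patch s])
  from patch s have "open D" and "norm n = 1"
    unfolding surface_patch_def n_def by simp_all
  then have unit: "n \<bullet> n = 1" by (simp add: norm_eq_1)
  have "((f \<circ> X) has_derivative (\<lambda>_. 0)) (at s)"
    by (rule has_derivative_transform_within_open[OF has_derivative_const \<open>open D\<close> s]) (use vanish in simp)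
  then have "f' \<circ> X' = (\<lambda>_. 0)"
    by (rule has_derivative_unique[OF diff_chain_at[OF X' f']])
  have g_tangent: "g \<bullet> v = 0" if "n \<bullet> v = 0" for v
  proof -
    have "v \<in> range X'"
      using that range_derivative_eq_tangent_plane[OF patch s] by (simp add: n_def X'_def)
    with \<open>f' \<circ> X' = (\<lambda>_. 0)\<close> show ?thesis
      by (auto simp: g_def amb_grad_inner[OF f'] fun_eq_iff)
  qed
  define v where "v = g - (n \<bullet> g) *\<^sub>R n"
  have "n \<bullet> v = 0" using unit by (simp add: v_def inner_diff_right)
  have "v \<bullet> v = g \<bullet> v - (n \<bullet> g) * (n \<bullet> v)"
    by (simp add: v_def inner_diff_left)
  also have "\<dots> = 0"
    using g_tangent \<open>n \<bullet> v = 0\<close> by simp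
  finally have "v \<bullet> v = 0" .
  then show ?thesis by (simp add: tgrad_def projP_mult_vec n_def g_def v_def)
qed

section \<open>The deformed normal\<close>

lemma frob_eq_inner: "frob A B = A \<bullet> B"
  by (simp add: frob_def inner_vec_def)

lemma frob_outer_eq_0:
  assumes "transpose S *v n = 0"
  shows "frob S (outer n a) = 0"
proof -
  have "frob S (outer n a) = (\<Sum>i\<in>UNIV. \<Sum>j\<in>UNIV. S$i$j * (n$i * a$j))"
    by (simp add: frob_def outer_def)
  also have "\<dots> = (\<Sum>j\<in>UNIV. \<Sum>i\<in>UNIV. S$i$j * (n$i * a$j))"
    by (rule sum.swap)
  also have "\<dots> = (\<Sum>j\<in>UNIV. a$j * (transpose S *v n)$j)"
    by (simp add: matrix_vector_mult_def transpose_def sum_distrib_left algebra_simps)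
  finally show ?thesis using assms by simp
qed

locale deformed_surface_patch =
  fixes X :: "real^2 \<Rightarrow> real^3" and D :: "(real^2) set" and T U :: "(real^3) set"
    and nu0 u :: "real^3 \<Rightarrow> real^3" and F :: "real^3 \<Rightarrow> real^3^3" and nu :: "real^3 \<Rightarrow> real^3"
  assumes patch: "surface_patch X D T nu0"
    and open_U: "open U" and T_subset_U: "T \<subseteq> U"
    and nu0_smooth: "C2_on U nu0" and u_smooth: "C2_on U u"
    and F_def: "\<And>y. F y = projP (nu0 y) + tgradV nu0 u y"
    and rank_F: "\<forall>x\<in>T. rank (F x) = 2"
    and nu_def: "\<And>y. nu y = (1 / norm (cofactor (F y) *v nu0 y)) *\<^sub>R (cofactor (F y) *v nu0 y)"
begin

lemma T_eq_image: "T = X ` D"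
  using patch unfolding surface_patch_def by blast

lemma normal_unit: "x \<in> T \<Longrightarrow> nu0 x \<bullet> nu0 x = 1"
  using patch unfolding surface_patch_def by (auto simp: norm_eq_1)

lemma F_mult_normal: "x \<in> T \<Longrightarrow> F x *v nu0 x = 0"
  by (simp add: F_def matrix_vector_mult_add_rdistrib projP_mult_vec tgradV_mult_normal normal_unit)

lemma cofactor_F_mult_normal_nonzero: "x \<in> T \<Longrightarrow> cofactor (F x) *v nu0 x \<noteq> 0"
  using rank_F by (intro cofactor_mult_kernel_nonzero F_mult_normal normal_unit) auto

lemma transpose_F_mult_nu: "x \<in> T \<Longrightarrow> transpose (F x) *v nu x = 0"
  using rank_F transpose_mult_cofactor_mult_vec[of "F x" "nu0 x"]
  by (simp add: nu_def matrix_vector_mult_scaleR det_eq_0_rank)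

lemma nu0_nth_differentiable: "x \<in> T \<Longrightarrow> (\<lambda>y. nu0 y $ i) differentiable (at x)"
  using T_subset_U by (intro differentiable_vec_nth C2_on_differentiable_at[OF nu0_smooth open_U]) auto

lemma tgrad_u_nth_differentiable:
  "x \<in> T \<Longrightarrow> (\<lambda>y. tgrad nu0 (\<lambda>z. u z $ i) y $ k) differentiable (at x)"
  using T_subset_U
  by (intro tgrad_vec_nth_differentiable nu0_nth_differentiable
      amb_grad_vec_nth_differentiable[OF u_smooth open_U]) auto

lemma F_entry_eq:
  "F y $ i $ k = ((mat 1 :: real^3^3) $ i $ k - nu0 y $ i * nu0 y $ k) + tgrad nu0 (\<lambda>z. u z $ i) y $ k"
  by (simp add: F_def projP_def outer_def tgradV_def)

lemma F_entry_differentiable: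
  assumes "x \<in> T"
  shows "(\<lambda>y. F y $ i $ k) differentiable (at x)"
  unfolding F_entry_eq
  by (intro differentiable_add differentiable_diff differentiable_mult differentiable_const
      nu0_nth_differentiable[OF assms] tgrad_u_nth_differentiable[OF assms])

lemma nu_nth_differentiable:
  assumes "x \<in> T"
  shows "(\<lambda>y. nu y $ i) differentiable (at x)"
proof -
  define w where "w y = cofactor (F y) *v nu0 y" for y
  have w: "w differentiable (at x)"
    unfolding w_def using assms
    by (intro cofactor_mult_vec_differentiable F_entry_differentiable nu0_nth_differentiable)
  have "w x \<noteq> 0"
    using cofactor_F_mult_normal_nonzero[OF assms] by (simp add: w_def)
  then have "(\<lambda>y. norm (w y)) differentiable (at x)"
    using differentiable_compose[of norm, OF differentiable_norm_at w] by (simp add: o_def)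
  then have "(\<lambda>y. inverse (norm (w y)) * w y $ i) differentiable (at x)"
    using \<open>w x \<noteq> 0\<close> by (intro differentiable_mult differentiable_inverse differentiable_vec_nth w) simp_all
  moreover have "(\<lambda>y. nu y $ i) = (\<lambda>y. inverse (norm (w y)) * w y $ i)"
    by (simp add: fun_eq_iff nu_def w_def divide_inverse)
  ultimately show ?thesis by simp
qed

lemma tgrad_F_entry:
  assumes "x \<in> T"
  shows "tgrad nu0 (\<lambda>y. F y $ i $ k) x = thess nu0 (\<lambda>z. u z $ i) x $ k
    - (nu0 x $ i *\<^sub>R tgradV nu0 nu0 x $ k + nu0 x $ k *\<^sub>R tgradV nu0 nu0 x $ i)"
proof -
  note n = nu0_nth_differentiable[OF assms]
  have "tgrad nu0 (\<lambda>y. F y $ i $ k) x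
      = tgrad nu0 (\<lambda>y. (mat 1 :: real^3^3) $ i $ k - nu0 y $ i * nu0 y $ k) x
        + tgrad nu0 (\<lambda>y. tgrad nu0 (\<lambda>z. u z $ i) y $ k) x"
    unfolding F_entry_eq
    by (intro tgrad_add differentiable_diff differentiable_mult differentiable_const n
        tgrad_u_nth_differentiable[OF assms])
  also have "tgrad nu0 (\<lambda>y. (mat 1 :: real^3^3) $ i $ k - nu0 y $ i * nu0 y $ k) x
      = - (nu0 x $ i *\<^sub>R tgradV nu0 nu0 x $ k + nu0 x $ k *\<^sub>R tgradV nu0 nu0 x $ i)"
    by (simp add: tgrad_diff[OF differentiable_const differentiable_mult[OF n n]] tgrad_const
        tgrad_mult[OF n n] tgradV_def)
  also have "tgrad nu0 (\<lambda>y. tgrad nu0 (\<lambda>z. u z $ i) y $ k) x = thess nu0 (\<lambda>z. u z $ i) x $ k"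
    by (simp add: thess_def tgradV_def)
  finally show ?thesis by simp
qed

(* Product rule for the k-th entry of F^T nu, which vanishes on T. *)

lemma tgrad_transpose_F_mult_nu_nth:
  assumes "x \<in> T"
  shows "(\<Sum>i\<in>UNIV. F x $ i $ k *\<^sub>R tgradV nu0 nu x $ i
    + nu x $ i *\<^sub>R tgrad nu0 (\<lambda>y. F y $ i $ k) x) = 0"
proof -
  obtain s where s: "s \<in> D" "x = X s"
    using assms T_eq_image by blast
  note F = F_entry_differentiable[OF assms] and nu = nu_nth_differentiable[OF assms]
  have "tgrad nu0 (\<lambda>y. \<Sum>i\<in>UNIV. F y $ i $ k * nu y $ i) x = 0"
    unfolding s(2)
  proof (rule tgrad_eq_0_if_vanishing_on_patch[OF patch s(1)])
    show "(\<lambda>y. \<Sum>i\<in>UNIV. F y $ i $ k * nu y $ i) differentiable (at (X s))"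
      unfolding s(2)[symmetric] by (rule differentiable_sum) (simp, intro ballI differentiable_mult F nu)
    show "\<forall>s'\<in>D. (\<Sum>i\<in>UNIV. F (X s') $ i $ k * nu (X s') $ i) = 0"
      using transpose_F_mult_nu T_eq_image
      by (auto simp: vec_eq_iff matrix_vector_mult_def transpose_def)
  qed
  then show ?thesis
    by (simp add: tgrad_sum tgrad_mult[OF F nu] tgradV_def differentiable_mult[OF F nu])
qed

lemma transpose_F_mult_tgradV_nu:
  assumes "x \<in> T"
  shows "transpose (F x) ** tgradV nu0 nu x
    = (nu0 x \<bullet> nu x) *\<^sub>R tgradV nu0 nu0 x - (\<Sum>i\<in>UNIV. nu x $ i *\<^sub>R thess nu0 (\<lambda>z. u z $ i) x)
      + outer (nu0 x) (transpose (tgradV nu0 nu0 x) *v nu x)"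
proof -
  define n m N G where "n = nu0 x" and "m = nu x" and "N = tgradV nu0 nu0 x" and "G = tgradV nu0 nu x"
  define Hs where "Hs i = thess nu0 (\<lambda>z. u z $ i) x" for i
  have row: "(\<Sum>i\<in>UNIV. F x $ i $ k * G $ i $ j
      + m $ i * (Hs i $ k $ j - (n $ i * N $ k $ j + n $ k * N $ i $ j))) = 0" for k j
    using arg_cong[OF tgrad_transpose_F_mult_nu_nth[OF assms, of k], of "\<lambda>v. v $ j"]
    by (simp add: tgrad_F_entry[OF assms] n_def m_def N_def G_def Hs_def)
  have "transpose (F x) ** G = (n \<bullet> m) *\<^sub>R N - (\<Sum>i\<in>UNIV. m $ i *\<^sub>R Hs i) + outer n (transpose N *v m)"
  proof (subst vec_eq_iff, intro allI, subst vec_eq_iff, intro allI)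
    fix k j
    show "(transpose (F x) ** G) $ k $ j
      = ((n \<bullet> m) *\<^sub>R N - (\<Sum>i\<in>UNIV. m $ i *\<^sub>R Hs i) + outer n (transpose N *v m)) $ k $ j"
      using row[of k j]
      by (simp add: matrix_matrix_mult_def transpose_def outer_def matrix_vector_mult_def
          inner_vec_def sum_3) algebra
  qed
  then show ?thesis by (simp add: n_def m_def N_def G_def Hs_def)
qed

lemma frob_transpose_F_mult_tgradV_nu:
  assumes "x \<in> T" and S_sym: "transpose S = S" and S_normal: "S *v nu0 x = 0"
  shows "frob S (transpose (F x) ** tgradV nu0 nu x - tgradV nu0 nu0 x)
    = - frob S ((\<Sum>i\<in>UNIV. nu x $ i *\<^sub>R thess nu0 (\<lambda>z. u z $ i) x)
        + (1 - nu0 x \<bullet> nu x) *\<^sub>R tgradV nu0 nu0 x)"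
proof -
  have "frob S (outer (nu0 x) (transpose (tgradV nu0 nu0 x) *v nu x)) = 0"
    using S_sym S_normal by (simp add: frob_outer_eq_0)
  then show ?thesis
    by (simp add: transpose_F_mult_tgradV_nu[OF assms(1)] frob_eq_inner
        inner_add_right inner_diff_right algebra_simps)
qed

end

theorem mainTheorem3:
  fixes X :: "real^2 \<Rightarrow> real^3" and D :: "(real^2) set"
    and T U :: "(real^3) set"
    and nu0 u :: "real^3 \<Rightarrow> real^3"
    and sigma :: "real^3 \<Rightarrow> real^3^3"
    and F :: "real^3 \<Rightarrow> real^3^3" and nu :: "real^3 \<Rightarrow> real^3"
    and H :: "real^3 \<Rightarrow> real^3^3"
  assumes patch: "surface_patch X D T nu0"
    and U: "open U" "closure T \<subseteq> U"
    and nu0_smooth: "C2_on U nu0"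
    and u_smooth: "C2_on U u"
    and F_def: "\<And>y. F y = projP (nu0 y) + tgradV nu0 u y"
    and rank2: "\<forall>x\<in>T. rank (F x) = 2"
    and nu_def: "\<And>y. nu y = (1 / norm (cofactor (F y) *v nu0 y)) *\<^sub>R (cofactor (F y) *v nu0 y)"
    and H_def: "\<And>y. H y = (\<Sum>i\<in>UNIV. nu y $ i *\<^sub>R thess nu0 (\<lambda>z. u z $ i) y)"
    and sigma_sym: "\<forall>x\<in>T. transpose (sigma x) = sigma x"
    and sigma_nu0: "\<forall>x\<in>T. sigma x *v nu0 x = 0"
  shows "(\<forall>x\<in>T. frob (sigma x) (transpose (F x) ** tgradV nu0 nu x - tgradV nu0 nu0 x)
                 = - frob (sigma x) (H x + (1 - nu0 x \<bullet> nu x) *\<^sub>R tgradV nu0 nu0 x))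
      \<and> integral D (\<lambda>s. frob (sigma (X s)) (transpose (F (X s)) ** tgradV nu0 nu (X s) - tgradV nu0 nu0 (X s))
                          * area_elem X s)
        = - integral D (\<lambda>s. frob (sigma (X s)) (H (X s) + (1 - nu0 (X s) \<bullet> nu (X s)) *\<^sub>R tgradV nu0 nu0 (X s))
                          * area_elem X s)"
proof -
  interpret deformed_surface_patch X D T U nu0 u F nu
    using order_trans[OF closure_subset U(2)]
    by (intro deformed_surface_patch.intro patch U(1) nu0_smooth u_smooth F_def rank2 nu_def)
  have pointwise: "frob (sigma x) (transpose (F x) ** tgradV nu0 nu x - tgradV nu0 nu0 x)
      = - frob (sigma x) (H x + (1 - nu0 x \<bullet> nu x) *\<^sub>R tgradV nu0 nu0 x)" if "x \<in> T" for x
    using frob_transpose_F_mult_tgradV_nu[OF that] sigma_sym sigma_nu0 that by (simp add: H_def)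
  have "integral D (\<lambda>s. frob (sigma (X s)) (transpose (F (X s)) ** tgradV nu0 nu (X s) - tgradV nu0 nu0 (X s))
        * area_elem X s)
      = integral D (\<lambda>s. - (frob (sigma (X s)) (H (X s) + (1 - nu0 (X s) \<bullet> nu (X s)) *\<^sub>R tgradV nu0 nu0 (X s))
        * area_elem X s))"
    using T_eq_image by (intro integral_cong) (simp add: pointwise)
  with pointwise show ?thesis by simp
qed

end
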